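(* Let $\Gamma$ be a finite set of formulas and $\alpha$ a formula, all in negation normal form, of the language $\{\rightarrow,\sim,\neg\}$. Then $\Gamma\vdash_{\text{Ł}(\neg)}\alpha$ if and only if there is a finite set $\Delta$ consisting of instances of the $\neg$-axioms such that $\boxdot\Gamma,\Delta\vdash_{\text{Ł}}\alpha$.
   Context: Formulas are built from a countable set of propositional variables using the connectives $\rightarrow$ (binary), $\sim$ and $\neg$ (unary). Write $\alpha\leftrightarrow\beta$ as shorthand for the pair of formulas $\alpha\rightarrow\beta$ and $\beta\rightarrow\alpha$ (an axiom of the form $\alpha\leftrightarrow\beta$ means both are axioms). Łukasiewicz logic $\vdash_{\text{Ł}}$ is axiomatized by the axiom schemes $\alpha\rightarrow(\beta\rightarrow\alpha)$; $(\alpha\rightarrow\beta)\rightarrow((\beta\rightarrow\gamma)\rightarrow(\alpha\rightarrow\gamma))$; $((\alpha\rightarrow\beta)\rightarrow\beta)\rightarrow((\beta\rightarrow\alpha)\rightarrow\alpha)$; $({\sim}\beta\rightarrow{\sim}\alpha)\rightarrow(\alpha\rightarrow\beta)$; and the rule Modus Ponens $\alpha,\alpha\rightarrow\beta/\beta$. When $\vdash_{\text{Ł}}$ is applied to formulas of the language $\{\rightarrow,\sim,\neg\}$, every formula whose main connective is $\neg$ is treated as an atomic formula. The logic $\text{Ł}(\neg)$ (consequence relation $\vdash_{\text{Ł}(\neg)}$) extends Łukasiewicz logic by the $\neg$-axioms $\neg\neg\alpha\leftrightarrow\alpha$; $\neg{\sim}\alpha\leftrightarrow{\sim}\neg\alpha$;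 $({\sim}\neg\alpha\rightarrow{\sim}\neg\beta)\leftrightarrow{\sim}\neg(\alpha\rightarrow\beta)$; and the rule $\alpha/{\sim}\neg\alpha$. A formula is in negation normal form if it is built using $\rightarrow,\sim$ only from literals of the form $p$ or $\neg p$ with $p$ a propositional variable. For a set $\Gamma$ of formulas, $\boxdot\Gamma:=\{{\sim}\neg\gamma:\gamma\in\Gamma\}\cup\Gamma$. *)

theory Defs
  imports Main
begin

text \<open>Formulas over countably many variables (indexed by nat) with connectives
  implication, strong negation (Sim) and the extra negation (Neg).\<close>
datatype fm = Var nat | Imp fm fm | Sim fm | Neg fm

text \<open>Biconditional axioms are represented as a pair of implications.\<close>
definition iff_pair :: "fm \<Rightarrow> fm \<Rightarrow> fm set" where
  "iff_pair a b = {Imp a b, Imp b a}"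

text \<open>Axiom schemes of Lukasiewicz logic; Neg-formulas are arbitrary formulas
  here, i.e. they behave as atoms for the Lukasiewicz calculus.\<close>
inductive luk_axiom :: "fm \<Rightarrow> bool" where
  A1: "luk_axiom (Imp a (Imp b a))"
| A2: "luk_axiom (Imp (Imp a b) (Imp (Imp b c) (Imp a c)))"
| A3: "luk_axiom (Imp (Imp (Imp a b) b) (Imp (Imp b a) a))"
| A4: "luk_axiom (Imp (Imp (Sim b) (Sim a)) (Imp a b))"

inductive luk_derives :: "fm set \<Rightarrow> fm \<Rightarrow> bool" where
  L_ax: "luk_axiom a \<Longrightarrow> luk_derives G a"
| L_hyp: "a \<in> G \<Longrightarrow> luk_derives G a"
| L_mp: "luk_derives G a \<Longrightarrow> luk_derives G (Imp a b) \<Longrightarrow> luk_derives G b"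

definition neg_axioms :: "fm set" where
  "neg_axioms =
     (\<Union>a. iff_pair (Neg (Neg a)) a)
   \<union> (\<Union>a. iff_pair (Neg (Sim a)) (Sim (Neg a)))
   \<union> (\<Union>a. \<Union>b. iff_pair (Imp (Sim (Neg a)) (Sim (Neg b))) (Sim (Neg (Imp a b))))"

inductive lukneg_derives :: "fm set \<Rightarrow> fm \<Rightarrow> bool" where
  N_ax: "luk_axiom a \<Longrightarrow> lukneg_derives G a"
| N_negax: "a \<in> neg_axioms \<Longrightarrow> lukneg_derives G a"
| N_hyp: "a \<in> G \<Longrightarrow> lukneg_derives G a"
| N_mp: "lukneg_derives G a \<Longrightarrow> lukneg_derives G (Imp a b) \<Longrightarrow> lukneg_derives G b"
| N_box: "lukneg_derives G a \<Longrightarrow> lukneg_derives G (Sim (Neg a))"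

fun nnf :: "fm \<Rightarrow> bool" where
  "nnf (Var p) = True"
| "nnf (Neg (Var p)) = True"
| "nnf (Neg _) = False"
| "nnf (Imp a b) = (nnf a \<and> nnf b)"
| "nnf (Sim a) = nnf a"

definition boxdot :: "fm set \<Rightarrow> fm set" where
  "boxdot G = {Sim (Neg g) | g. g \<in> G} \<union> G"

end

theory Submission
  imports Defs
begin

(* Right to left is immediate: boxdot \<Gamma> and the \<not>-axioms are L(\<not>)-derivable
   from \<Gamma>. For left to right, an induction on L(\<not>)-derivations shows that both \<alpha> and
   \<sim>\<not>\<alpha> are L-derivable from boxdot \<Gamma> plus finitely many \<not>-axiom instances, which
   handles the rule \<alpha>/\<sim>\<not>\<alpha>. For an axiom \<alpha>, the \<not>-axioms push \<sim>\<not> inward through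
   \<alpha> (sneg_inward); this maps each L-axiom to an instance of the same scheme and each
   \<not>-axiom to a formula derivable from further \<not>-axioms. *)

locale luk_calculus =
  fixes derivable :: "fm \<Rightarrow> bool"
  assumes axiom: "luk_axiom a \<Longrightarrow> derivable a"
    and mp: "derivable a \<Longrightarrow> derivable (Imp a b) \<Longrightarrow> derivable b"
begin

lemma weaken: "derivable (Imp a (Imp b a))"
  by (intro axiom luk_axiom.A1)

lemma imp_trans_ax: "derivable (Imp (Imp a b) (Imp (Imp b c) (Imp a c)))"
  by (intro axiom luk_axiom.A2)

lemma luk_ax: "derivable (Imp (Imp (Imp a b) b) (Imp (Imp b a) a))"
  by (intro axiom luk_axiom.A3)

lemma contrapos_ax: "derivable (Imp (Imp (Sim b) (Sim a)) (Imp a b))"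
  by (intro axiom luk_axiom.A4)

lemma imp_swap: "derivable (Imp (Imp a (Imp b c)) (Imp b (Imp a c)))"
  by (meson imp_trans_ax weaken luk_ax mp)

lemma imp_refl: "derivable (Imp a a)"
  by (metis imp_trans_ax weaken luk_ax mp)

lemma sim_sim_elim: "derivable (Imp (Sim (Sim a)) a)"
  by (metis imp_trans_ax luk_ax contrapos_ax mp imp_swap imp_refl)

lemma sim_sim_intro: "derivable (Imp a (Sim (Sim a)))"
  by (metis imp_trans_ax luk_ax contrapos_ax mp imp_swap imp_refl)

lemma imp_trans: "derivable (Imp a b) \<Longrightarrow> derivable (Imp b c) \<Longrightarrow> derivable (Imp a c)"
  by (meson imp_trans_ax mp)

lemma imp_mono:
  assumes "derivable (Imp a' a)" and "derivable (Imp b b')"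
  shows "derivable (Imp (Imp a b) (Imp a' b'))"
proof (rule imp_trans)
  show "derivable (Imp (Imp a b) (Imp a' b))"
    using assms(1) imp_trans_ax mp by blast
  have "derivable (Imp (Imp b b') (Imp (Imp a' b) (Imp a' b')))"
    using imp_trans_ax imp_swap mp by blast
  then show "derivable (Imp (Imp a' b) (Imp a' b'))"
    using assms(2) mp by blast
qed

lemma sim_antimono:
  assumes "derivable (Imp a b)"
  shows "derivable (Imp (Sim b) (Sim a))"
proof -
  have "derivable (Imp (Sim (Sim a)) (Sim (Sim b)))"
    using mp[OF assms imp_mono[OF sim_sim_elim sim_sim_intro]] .
  then show ?thesis
    using contrapos_ax mp by blast
qed

end

definition luk_negax_derives :: "fm set \<Rightarrow> fm \<Rightarrow> bool" where
  "luk_negax_derives G a \<longleftrightarrow>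
     (\<exists>\<Delta>. finite \<Delta> \<and> \<Delta> \<subseteq> neg_axioms \<and> luk_derives (G \<union> \<Delta>) a)"

lemma luk_derives_mono: "luk_derives G a \<Longrightarrow> G \<subseteq> H \<Longrightarrow> luk_derives H a"
  by (induction rule: luk_derives.induct) (auto intro: luk_derives.intros)

lemma luk_negax_derives_hyp: "a \<in> G \<Longrightarrow> luk_negax_derives G a"
  unfolding luk_negax_derives_def by (blast intro: L_hyp)

lemma luk_negax_derives_neg_axiom: "a \<in> neg_axioms \<Longrightarrow> luk_negax_derives G a"
  unfolding luk_negax_derives_def by (intro exI[of _ "{a}"]) (auto intro: L_hyp)

lemma luk_negax_derives_mp:
  assumes "luk_negax_derives G a" and "luk_negax_derives G (Imp a b)"
  shows "luk_negax_derives G b"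
proof -
  obtain \<Delta>\<^sub>1 \<Delta>\<^sub>2 where
    "finite \<Delta>\<^sub>1" "\<Delta>\<^sub>1 \<subseteq> neg_axioms" "luk_derives (G \<union> \<Delta>\<^sub>1) a"
    "finite \<Delta>\<^sub>2" "\<Delta>\<^sub>2 \<subseteq> neg_axioms" "luk_derives (G \<union> \<Delta>\<^sub>2) (Imp a b)"
    using assms unfolding luk_negax_derives_def by blast
  then have "luk_derives (G \<union> (\<Delta>\<^sub>1 \<union> \<Delta>\<^sub>2)) b"
    by (meson L_mp luk_derives_mono Un_mono order_refl Un_upper1 Un_upper2)
  with \<open>finite \<Delta>\<^sub>1\<close> \<open>finite \<Delta>\<^sub>2\<close> \<open>\<Delta>\<^sub>1 \<subseteq> neg_axioms\<close> \<open>\<Delta>\<^sub>2 \<subseteq> neg_axioms\<close>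
  show ?thesis
    unfolding luk_negax_derives_def by (intro exI[of _ "\<Delta>\<^sub>1 \<union> \<Delta>\<^sub>2"]) simp
qed

interpretation negax: luk_calculus "luk_negax_derives G" for G
proof
  show "luk_negax_derives G a" if "luk_axiom a" for a
    using that unfolding luk_negax_derives_def by (blast intro: L_ax)
qed (rule luk_negax_derives_mp)

lemma neg_axiomsI:
  "Imp (Neg (Neg a)) a \<in> neg_axioms" "Imp a (Neg (Neg a)) \<in> neg_axioms"
  "Imp (Neg (Sim a)) (Sim (Neg a)) \<in> neg_axioms" "Imp (Sim (Neg a)) (Neg (Sim a)) \<in> neg_axioms"
  "Imp (Imp (Sim (Neg a)) (Sim (Neg b))) (Sim (Neg (Imp a b))) \<in> neg_axioms"
  "Imp (Sim (Neg (Imp a b))) (Imp (Sim (Neg a)) (Sim (Neg b))) \<in> neg_axioms"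
  unfolding neg_axioms_def iff_pair_def by blast+

lemma neg_axiomsE:
  assumes "c \<in> neg_axioms"
  obtains a where "c = Imp (Neg (Neg a)) a"
  | a where "c = Imp a (Neg (Neg a))"
  | a where "c = Imp (Neg (Sim a)) (Sim (Neg a))"
  | a where "c = Imp (Sim (Neg a)) (Neg (Sim a))"
  | a b where "c = Imp (Imp (Sim (Neg a)) (Sim (Neg b))) (Sim (Neg (Imp a b)))"
  | a b where "c = Imp (Sim (Neg (Imp a b))) (Imp (Sim (Neg a)) (Sim (Neg b)))"
  using assms unfolding neg_axioms_def iff_pair_def by blast

fun sneg_inward :: "fm \<Rightarrow> fm" where
  "sneg_inward (Var p) = Sim (Neg (Var p))"
| "sneg_inward (Imp a b) = Imp (sneg_inward a) (sneg_inward b)"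
| "sneg_inward (Sim a) = Sim (sneg_inward a)"
| "sneg_inward (Neg a) = Sim a"

lemma luk_axiom_sneg_inward: "luk_axiom a \<Longrightarrow> luk_axiom (sneg_inward a)"
  by (induction rule: luk_axiom.induct) (auto intro: luk_axiom.intros)

lemma sneg_inward_equiv:
  "luk_negax_derives G (Imp (sneg_inward a) (Sim (Neg a))) \<and>
   luk_negax_derives G (Imp (Sim (Neg a)) (sneg_inward a))"
proof (induction a)
  case (Var p)
  show ?case using negax.imp_refl by simp
next
  case (Imp a b)
  then have "luk_negax_derives G (Imp (sneg_inward (Imp a b)) (Imp (Sim (Neg a)) (Sim (Neg b))))"
    and "luk_negax_derives G (Imp (Imp (Sim (Neg a)) (Sim (Neg b))) (sneg_inward (Imp a b)))"
    using negax.imp_mono by auto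
  then show ?case
    using negax.imp_trans luk_negax_derives_neg_axiom neg_axiomsI(5,6) by meson
next
  case (Sim a)
  then have "luk_negax_derives G (Imp (sneg_inward (Sim a)) (Sim (Sim (Neg a))))"
    and "luk_negax_derives G (Imp (Sim (Sim (Neg a))) (sneg_inward (Sim a)))"
    using negax.sim_antimono by auto
  then show ?case
    using negax.imp_trans negax.sim_antimono luk_negax_derives_neg_axiom neg_axiomsI(3,4)
    by meson
next
  case (Neg a)
  show ?case
    using negax.sim_antimono luk_negax_derives_neg_axiom neg_axiomsI(1,2) by simp
qed

lemma luk_negax_derives_sim_neg:
  "luk_negax_derives G (sneg_inward a) \<Longrightarrow> luk_negax_derives G (Sim (Neg a))"
  using sneg_inward_equiv negax.mp by blast

lemma neg_axiom_sneg_inward: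
  assumes "c \<in> neg_axioms"
  shows "luk_negax_derives G (sneg_inward c)"
  using assms
proof (cases rule: neg_axiomsE)
  case (5 a b)
  have "luk_negax_derives G (Imp (Imp (Sim (Sim a)) (Sim (Sim b))) (Sim (Sim (Imp a b))))"
    using negax.imp_trans[OF negax.imp_mono[OF negax.sim_sim_intro negax.sim_sim_elim]
        negax.sim_sim_intro] .
  with 5 show ?thesis by simp
next
  case (6 a b)
  have "luk_negax_derives G (Imp (Sim (Sim (Imp a b))) (Imp (Sim (Sim a)) (Sim (Sim b))))"
    using negax.imp_trans[OF negax.sim_sim_elim
        negax.imp_mono[OF negax.sim_sim_elim negax.sim_sim_intro]] .
  with 6 show ?thesis by simp
qed (use sneg_inward_equiv negax.imp_refl in auto)

lemma lukneg_derives_imp_luk_negax_derives_boxdot: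
  "lukneg_derives G a \<Longrightarrow>
   luk_negax_derives (boxdot G) a \<and> luk_negax_derives (boxdot G) (Sim (Neg a))"
proof (induction rule: lukneg_derives.induct)
  case (N_ax a G)
  then show ?case
    using negax.axiom luk_axiom_sneg_inward luk_negax_derives_sim_neg by blast
next
  case (N_negax a G)
  then show ?case
    using luk_negax_derives_neg_axiom neg_axiom_sneg_inward luk_negax_derives_sim_neg by blast
next
  case (N_hyp a G)
  then show ?case
    unfolding boxdot_def by (auto intro: luk_negax_derives_hyp)
next
  case (N_mp G a b)
  then show ?case
    using negax.mp luk_negax_derives_neg_axiom neg_axiomsI(6) by meson
next
  case (N_box G a)
  then have "luk_negax_derives (boxdot G) (sneg_inward (Sim (Neg a)))"
    using negax.mp negax.sim_sim_intro by (simp, blast)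
  with N_box show ?case
    using luk_negax_derives_sim_neg by blast
qed

lemma lukneg_derives_if_luk_derives_boxdot:
  "luk_derives H a \<Longrightarrow> H \<subseteq> boxdot G \<union> neg_axioms \<Longrightarrow> lukneg_derives G a"
proof (induction rule: luk_derives.induct)
  case (L_hyp a H)
  then show ?case
    unfolding boxdot_def by (auto intro: lukneg_derives.intros)
qed (auto intro: lukneg_derives.intros)

theorem lemma1:
  assumes "finite \<Gamma>" and "\<forall>g\<in>\<Gamma>. nnf g" and "nnf \<alpha>"
  shows "lukneg_derives \<Gamma> \<alpha> \<longleftrightarrow>
    (\<exists>\<Delta>. finite \<Delta> \<and> \<Delta> \<subseteq> neg_axioms \<and> luk_derives (boxdot \<Gamma> \<union> \<Delta>) \<alpha>)"
  using lukneg_derives_imp_luk_negax_derives_boxdot lukneg_derives_if_luk_derives_boxdot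
  unfolding luk_negax_derives_def by blast

end
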